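(* Let $D=0.5$, $N_p\ge1$, and let $p_1,\dots,p_{N_p}$ be the PWM basis functions defined in the context. Let $f:[0,1]\to\mathbb R$ be any function such that: the restriction of $f$ to $[0,0.5)$ coincides with a polynomial of degree at most $N_p$; $f$ is continuous at $\tau=0.5$; and $f(\tau+0.5)=-f(\tau)$ for all $\tau\in[0,0.5]$. Then $f$ is a linear combination of $p_1,\dots,p_{N_p}$.
   Context: The PWM basis functions with duty cycle $D\in(0,1)$ are functions of the relative time $\tau\in[0,1]$, defined recursively as follows. Set $p_0(\tau)=1$ on $[0,1]$, and $$p_1(\tau)=\begin{cases}\sqrt3\,\dfrac{2\tau-D}{D}, & 0\le\tau\le D,\\[2mm] \sqrt3\,\dfrac{1+D-2\tau}{1-D}, & D\le\tau\le 1.\end{cases}$$ For $k\ge2$, define $p_k^\star(\tau)=\int_D^\tau p_{k-1}(\tau')\,d\tau'$, then $$\overline p_k(\tau)=p_k^\star(\tau)-\sum_{l=0}^{k-1}p_l(\tau)\int_0^1 p_l(s)\,p_k^\star(s)\,ds,\qquad p_k(\tau)=\frac{\overline p_k(\tau)}{\left(\int_0^1\overline p_k(s)^2\,ds\right)^{1/2}}.$$ *)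

theory Defs
  imports "HOL-Analysis.Analysis" "HOL-Computational_Algebra.Polynomial"
begin

definition oint :: "real \<Rightarrow> real \<Rightarrow> (real \<Rightarrow> real) \<Rightarrow> real" where
  "oint a b f = (if a \<le> b then integral {a..b} f else - integral {b..a} f)"

function pwm :: "real \<Rightarrow> nat \<Rightarrow> real \<Rightarrow> real" where
  "pwm D 0 = (\<lambda>\<tau>. 1)"
| "pwm D (Suc 0) = (\<lambda>\<tau>. if \<tau> \<le> D then sqrt 3 * (2 * \<tau> - D) / D
                           else sqrt 3 * (1 + D - 2 * \<tau>) / (1 - D))"
| "pwm D (Suc (Suc k)) =
     (let ps = (\<lambda>\<tau>. oint D \<tau> (pwm D (Suc k)));
          pb = (\<lambda>\<tau>. ps \<tau> - (\<Sum>l<Suc (Suc k).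
                   pwm D l \<tau> * integral {0..1} (\<lambda>s. pwm D l s * ps s)))
      in (\<lambda>\<tau>. pb \<tau> / sqrt (integral {0..1} (\<lambda>s. (pb s)\<^sup>2))))"
  by pat_completeness auto
termination by (relation "Wellfounded.measure (\<lambda>(D, k). k)") auto

end

theory Submission
  imports Defs
begin

text \<open>For \<open>k \<ge> 1\<close> the basis function \<open>p\<^sub>k\<close> (with \<open>D = 1/2\<close>) is a polynomial of
  exact degree \<open>k\<close> on \<open>[0, 1/2]\<close> and satisfies \<open>p\<^sub>k (\<tau> + 1/2) = - p\<^sub>k \<tau>\<close>.
  This is clear for \<open>p\<^sub>1\<close>, and it propagates: if \<open>g\<close> has this shape, its primitive
  \<open>P\<close> vanishing at \<open>1/2\<close> is a polynomial of one degree more on \<open>[0, 1/2]\<close>, and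
  \<open>P \<tau> + P (\<tau> + 1/2)\<close> is a constant, equal to twice the mean of \<open>P\<close>. So removing
  the \<open>p\<^sub>0\<close>-component of \<open>P\<close> restores the antisymmetry, while all other
  Gram--Schmidt corrections are antisymmetric already. An antisymmetric function is
  determined by its polynomial on \<open>[0, 1/2]\<close>, so by degree counting
  \<open>p\<^sub>1, \<dots>, p\<^sub>N\<close> span all of them of degree at most \<open>N\<close>; continuity at \<open>1/2\<close>
  puts \<open>f\<close> among them.\<close>

lemma exists_pderiv_eq:
  fixes q :: "'a::field_char_0 poly"
  shows "\<exists>Q. pderiv Q = q"
proof -
  let ?Q = "\<Sum>i\<le>degree q. monom (coeff q i / of_nat (Suc i)) (Suc i)"
  have "pderiv ?Q = (\<Sum>i\<le>degree q. pderiv (monom (coeff q i / of_nat (Suc i)) (Suc i)))"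
    using higher_pderiv_sum[of 1] by simp
  also have "\<dots> = (\<Sum>i\<le>degree q. monom (coeff q i) i)"
    by (simp add: pderiv_monom del: of_nat_Suc)
  also have "\<dots> = q"
    by (rule poly_as_sum_of_monoms)
  finally show ?thesis by blast
qed

lemma degree_eq_Suc_degree_pderiv:
  fixes Q :: "'a::{idom, ring_char_0} poly"
  assumes "pderiv Q \<noteq> 0"
  shows "degree Q = Suc (degree (pderiv Q))"
  using assms degree_pderiv[of Q] pderiv_eq_0_iff[of Q] by simp

lemma primitive_of_poly_on_convex:
  fixes F :: "real \<Rightarrow> real"
  assumes "convex S"
    and F': "\<And>x. x \<in> S \<Longrightarrow> (F has_real_derivative poly q x) (at x within S)"
  obtains Q where "pderiv Q = q" and "\<And>x. x \<in> S \<Longrightarrow> F x = poly Q x"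
proof -
  obtain Q0 where Q0: "pderiv Q0 = q"
    using exists_pderiv_eq by blast
  have "((\<lambda>x. F x - poly Q0 x) has_real_derivative 0) (at x within S)" if "x \<in> S" for x
    using DERIV_diff[OF F'[OF that] has_field_derivative_at_within[OF poly_DERIV[of Q0 x]]] Q0
    by simp
  then have "\<exists>c. \<forall>x\<in>S. F x - poly Q0 x = c"
    by (intro has_field_derivative_zero_constant[OF \<open>convex S\<close>]) auto
  then obtain c where "\<And>x. x \<in> S \<Longrightarrow> F x - poly Q0 x = c"
    by blast
  then show ?thesis
    using that[of "Q0 + [:c:]"] Q0 by (simp add: pderiv_add pderiv_pCons algebra_simps)
qed

lemma eq_at_right_endpoint_if_continuous:
  fixes g h :: "real \<Rightarrow> real"
  assumes "a < b" "{a..<b} \<subseteq> S" "continuous (at b within S) g" "isCont h b"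
    and "\<And>x. x \<in> {a..<b} \<Longrightarrow> g x = h x"
  shows "g b = h b"
proof -
  have "(g \<longlongrightarrow> g b) (at b within {a..<b})"
    using assms(2,3) unfolding continuous_within by (rule tendsto_within_subset[rotated])
  moreover have "(g \<longlongrightarrow> h b) (at b within {a..<b})"
  proof (rule Lim_transform_within[where d=1])
    show "(h \<longlongrightarrow> h b) (at b within {a..<b})"
      using assms(4) unfolding isCont_def by (rule tendsto_within_subset) simp
  qed (use assms(5) in auto)
  moreover have "at b within {a..<b} \<noteq> bot"
    using \<open>a < b\<close> by (simp add: trivial_limit_within)
  ultimately show ?thesis
    using tendsto_unique by blast
qed

lemma oint_eq_integral_diff:
  fixes g :: "real \<Rightarrow> real"
  assumes "g integrable_on {a..b}" "c \<in> {a..b}" "t \<in> {a..b}"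
  shows "oint c t g = integral {a..t} g - integral {a..c} g"
proof (cases "c \<le> t")
  case True
  have "integral {a..c} g + integral {c..t} g = integral {a..t} g"
    by (rule Henstock_Kurzweil_Integration.integral_combine)
      (use True assms in \<open>auto intro: integrable_on_subinterval\<close>)
  then show ?thesis
    using True by (simp add: oint_def)
next
  case False
  have "integral {a..t} g + integral {t..c} g = integral {a..c} g"
    by (rule Henstock_Kurzweil_Integration.integral_combine)
      (use False assms in \<open>auto intro: integrable_on_subinterval\<close>)
  then show ?thesis
    using False by (simp add: oint_def)
qed

lemma oint_has_real_derivative:
  fixes g :: "real \<Rightarrow> real"
  assumes "continuous_on {a..b} g" "c \<in> {a..b}" "t \<in> {a..b}"
  shows "((\<lambda>s. oint c s g) has_real_derivative g t) (at t within {a..b})"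
proof -
  have deriv: "((\<lambda>s. integral {a..s} g - integral {a..c} g) has_real_derivative g t)
      (at t within {a..b})"
    using DERIV_diff[OF integral_has_real_derivative[OF assms(1,3)] DERIV_const] by simp
  show ?thesis
    using oint_eq_integral_diff[OF integrable_continuous_interval[OF assms(1)] assms(2)]
    by (intro has_field_derivative_transform_within[OF deriv zero_less_one assms(3)]) simp
qed

lemma has_real_derivative_shift_within:
  fixes f :: "real \<Rightarrow> real"
  assumes "(f has_real_derivative f') (at (x + a) within T)" "(\<lambda>t. t + a) ` S \<subseteq> T"
  shows "((\<lambda>t. f (t + a)) has_real_derivative f') (at x within S)"
proof -
  have "((\<lambda>t. t + a) has_real_derivative 1) (at x within S)"
    by (auto intro!: derivative_eq_intros)
  from DERIV_image_chain[OF DERIV_subset[OF assms] this] show ?thesis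
    by (simp add: o_def)
qed

lemma half_shift_sum_eq:
  fixes F f :: "real \<Rightarrow> real"
  assumes F': "\<And>t. t \<in> {0..1} \<Longrightarrow> (F has_real_derivative f t) (at t within {0..1})"
    and f: "\<And>t. t \<in> {0..1/2} \<Longrightarrow> f t + f (t + 1/2) = c"
    and t: "t \<in> {0..1/2}"
  shows "F t + F (t + 1/2) = F 0 + F (1/2) + c * t"
proof -
  have "((\<lambda>t. F t + F (t + 1/2) - c * t) has_real_derivative 0) (at t within {0..1/2})"
    if "t \<in> {0..1/2}" for t
  proof -
    have "(F has_real_derivative f t) (at t within {0..1/2})"
      by (rule DERIV_subset[OF F']) (use that in auto)
    moreover have "((\<lambda>t. F (t + 1/2)) has_real_derivative f (t + 1/2)) (at t within {0..1/2})"
      by (rule has_real_derivative_shift_within[OF F']) (use that in auto)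
    moreover have "((\<lambda>t. c * t) has_real_derivative c) (at t within {0..1/2})"
      by (auto intro!: derivative_eq_intros)
    ultimately show ?thesis
      using DERIV_diff[OF DERIV_add] f[OF that] by fastforce
  qed
  then have "\<exists>k. \<forall>t\<in>{0..1/2}. F t + F (t + 1/2) - c * t = k"
    by (intro has_field_derivative_zero_constant) auto
  then obtain k where "\<And>t. t \<in> {0..1/2} \<Longrightarrow> F t + F (t + 1/2) - c * t = k"
    by blast
  from this[OF t] this[of 0] show ?thesis
    by simp
qed

lemma integral_01_eq_half_shift_sum:
  fixes f :: "real \<Rightarrow> real"
  assumes "continuous_on {0..1} f" and "\<And>t. t \<in> {0..1/2} \<Longrightarrow> f t + f (t + 1/2) = c"
  shows "integral {0..1} f = c / 2"
proof -
  have "integral {0..1/2} f + integral {0..1/2 + 1/2} f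
      = integral {0..0} f + integral {0..1/2} f + c * (1/2)"
    by (rule half_shift_sum_eq[OF integral_has_real_derivative[OF assms(1)] assms(2)]) auto
  then show ?thesis
    by simp
qed

definition half_wave_poly :: "(real \<Rightarrow> real) \<Rightarrow> real poly \<Rightarrow> bool" where
  "half_wave_poly g q \<longleftrightarrow> (\<forall>t\<in>{0..1/2}. g t = poly q t \<and> g (t + 1/2) = - g t)"

lemma half_wave_polyD:
  assumes "half_wave_poly g q" "t \<in> {0..1/2}"
  shows "g t = poly q t" and "g (t + 1/2) = - g t"
  using assms unfolding half_wave_poly_def by auto

lemma half_wave_poly_second_half:
  assumes "half_wave_poly g q" "t \<in> {1/2..1}"
  shows "g t = - poly q (t - 1/2)"
proof -
  have "t - 1/2 \<in> {0..1/2}"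
    using assms(2) by auto
  from half_wave_polyD[OF assms(1) this] show ?thesis
    by simp
qed

lemma half_wave_poly_continuous_on:
  assumes "half_wave_poly g q"
  shows "continuous_on {0..1} g"
proof -
  have "continuous_on {0..1/2} (poly q)"
    by (intro continuous_intros)
  then have "continuous_on {0..1/2} g"
    by (rule continuous_on_eq) (simp add: half_wave_polyD(1)[OF assms])
  have "continuous_on {1/2..1} (\<lambda>t. - poly q (t - 1/2))"
    by (intro continuous_intros)
  then have "continuous_on {1/2..1} g"
    by (rule continuous_on_eq) (simp add: half_wave_poly_second_half[OF assms])
  moreover note \<open>continuous_on {0..1/2} g\<close>
  ultimately have "continuous_on ({0..1/2} \<union> {1/2..1}) g"
    by (intro continuous_on_closed_Un) auto
  then show ?thesis
    by (simp add: ivl_disj_un_two_touch)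
qed

lemma half_wave_poly_degree_0:
  assumes "half_wave_poly g q" "degree q = 0"
  shows "q = 0"
proof -
  obtain a where q: "q = [:a:]"
    using \<open>degree q = 0\<close> degree_eq_zeroE by blast
  have "a = - a"
    using half_wave_polyD[OF assms(1), of 0] half_wave_polyD(1)[OF assms(1), of "1/2"] q by simp
  then show ?thesis
    using q by simp
qed

lemma half_wave_poly_zero:
  assumes "half_wave_poly g 0" "t \<in> {0..1}"
  shows "g t = 0"
  using assms half_wave_poly_second_half[OF assms(1)] unfolding half_wave_poly_def
  by (cases "t \<le> 1/2") auto

lemma half_wave_poly_diff:
  "half_wave_poly g q \<Longrightarrow> half_wave_poly h r \<Longrightarrow> half_wave_poly (\<lambda>t. g t - h t) (q - r)"
  by (simp add: half_wave_poly_def)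

lemma half_wave_poly_smult:
  "half_wave_poly g q \<Longrightarrow> half_wave_poly (\<lambda>t. c * g t) (smult c q)"
  by (simp add: half_wave_poly_def)

lemma half_wave_poly_sum:
  assumes "\<And>l. l \<in> A \<Longrightarrow> half_wave_poly (h l) (r l)"
  shows "half_wave_poly (\<lambda>t. \<Sum>l\<in>A. c l * h l t) (\<Sum>l\<in>A. smult (c l) (r l))"
  using assms unfolding half_wave_poly_def
  by (auto simp: poly_sum sum_negf[symmetric] intro!: sum.cong)

lemma integral_square_half_wave_poly_pos:
  assumes "half_wave_poly g q" "q \<noteq> 0"
  shows "integral {0..1} (\<lambda>t. (g t)\<^sup>2) > 0"
proof -
  have cont: "continuous_on {0..1} (\<lambda>t. (g t)\<^sup>2)"
    by (intro continuous_intros half_wave_poly_continuous_on[OF assms(1)])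
  have "infinite {0..1/2::real}"
    by simp
  then have "\<not> {0..1/2} \<subseteq> {t. poly q t = 0}"
    using poly_roots_finite[OF assms(2)] finite_subset by blast
  then obtain t where t: "t \<in> {0..1/2}" and "poly q t \<noteq> 0"
    by blast
  then have "g t \<noteq> 0" and "t \<in> {0..1}"
    using half_wave_polyD(1)[OF assms(1) t] by auto
  then have "integral {0..1} (\<lambda>t. (g t)\<^sup>2) \<noteq> 0"
    using integral_eq_0_iff[OF cont] by auto
  moreover have "integral {0..1} (\<lambda>t. (g t)\<^sup>2) \<ge> 0"
    using integrable_continuous_interval[OF cont] by (intro integral_nonneg) auto
  ultimately show ?thesis
    by simp
qed

lemma half_wave_poly_centred_primitive:
  assumes g: "half_wave_poly g q"
  defines "P \<equiv> \<lambda>t. oint (1/2) t g"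
  obtains Q where "pderiv Q = q" and "half_wave_poly (\<lambda>t. P t - integral {0..1} P) Q"
proof -
  have P': "(P has_real_derivative g t) (at t within {0..1})" if "t \<in> {0..1}" for t
    unfolding P_def
    using oint_has_real_derivative[OF half_wave_poly_continuous_on[OF g] _ that] by simp
  have g_shift: "g t + g (t + 1/2) = 0" if "t \<in> {0..1/2}" for t
    using half_wave_polyD(2)[OF g that] by simp
  have P_shift: "P t + P (t + 1/2) = P 0" if "t \<in> {0..1/2}" for t
  proof -
    have "P t + P (t + 1/2) = P 0 + P (1/2) + 0 * t"
      by (rule half_shift_sum_eq[OF P' g_shift that])
    moreover have "P (1/2) = 0"
      by (simp add: P_def oint_def)
    ultimately show ?thesis
      by simp
  qed
  have "integral {0..1} P = P 0 / 2"
    using integral_01_eq_half_shift_sum[OF DERIV_continuous_on[OF P'] P_shift] .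
  moreover
  obtain Q where Q: "pderiv Q = q" and PQ: "\<And>t. t \<in> {0..1/2} \<Longrightarrow> P t = poly Q t"
  proof (rule primitive_of_poly_on_convex[of "{0..1/2}" P q])
    show "(P has_real_derivative poly q t) (at t within {0..1/2})" if "t \<in> {0..1/2}" for t
      using DERIV_subset[OF P'[of t]] half_wave_polyD(1)[OF g that] that by auto
  qed auto
  ultimately have "half_wave_poly (\<lambda>t. P t - integral {0..1} P) (Q - [:P 0 / 2:])"
    unfolding half_wave_poly_def
  proof (intro ballI conjI)
    fix t :: real
    assume "integral {0..1} P = P 0 / 2" and t: "t \<in> {0..1/2}"
    then show "P t - integral {0..1} P = poly (Q - [:P 0 / 2:]) t"
      and "P (t + 1/2) - integral {0..1} P = - (P t - integral {0..1} P)"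
      using PQ[OF t] P_shift[OF t] by simp_all
  qed
  moreover have "pderiv (Q - [:P 0 / 2:]) = q"
    using Q by (simp add: pderiv_diff pderiv_pCons)
  ultimately show ?thesis
    using that by blast
qed

lemma half_wave_poly_pwm_1: "half_wave_poly (pwm (1/2) 1) [:- sqrt 3, 4 * sqrt 3:]"
  unfolding half_wave_poly_def
proof (intro ballI conjI)
  fix t :: real
  assume t: "t \<in> {0..1/2}"
  then show "pwm (1/2) 1 t = poly [:- sqrt 3, 4 * sqrt 3:] t"
    by (simp add: field_simps)
  show "pwm (1/2) 1 (t + 1/2) = - pwm (1/2) 1 t"
    using t by (cases "t = 0") (auto simp: field_simps)
qed

lemma pwm_Suc_Suc_eq:
  fixes D :: real and k :: nat
  defines "P \<equiv> \<lambda>t. oint D t (pwm D (Suc k))"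
  defines "pb \<equiv> \<lambda>t. P t - integral {0..1} P
      - (\<Sum>l<Suc k. integral {0..1} (\<lambda>s. pwm D (Suc l) s * P s) * pwm D (Suc l) t)"
  shows "pwm D (Suc (Suc k)) = (\<lambda>t. (1 / sqrt (integral {0..1} (\<lambda>s. (pb s)\<^sup>2))) * pb t)"
proof -
  have pb_eq: "P t - (\<Sum>l<Suc (Suc k). pwm D l t * integral {0..1} (\<lambda>s. pwm D l s * P s)) = pb t"
    for t
  proof -
    \<comment> \<open>\<open>p\<^sub>0 = 1\<close>, so the \<open>l = 0\<close> term is the mean of \<open>P\<close>\<close>
    have "(\<Sum>l<Suc (Suc k). pwm D l t * integral {0..1} (\<lambda>s. pwm D l s * P s))
        = integral {0..1} P
          + (\<Sum>l<Suc k. integral {0..1} (\<lambda>s. pwm D (Suc l) s * P s) * pwm D (Suc l) t)"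
      by (simp only: sum.lessThan_Suc_shift) (simp add: mult.commute)
    then show ?thesis
      unfolding pb_def by simp
  qed
  have "oint D t (pwm D (Suc k)) = P t" for t
    by (simp add: P_def)
  then show ?thesis
    by (simp only: pwm.simps Let_def pb_eq) simp
qed

lemma half_wave_poly_pwm_Suc_Suc:
  assumes IH: "\<And>l. l \<in> {1..Suc k} \<Longrightarrow> \<exists>q. degree q = l \<and> half_wave_poly (pwm (1/2) l) q"
  shows "\<exists>q. degree q = Suc (Suc k) \<and> half_wave_poly (pwm (1/2) (Suc (Suc k))) q"
proof -
  have "\<forall>l\<in>{..<Suc k}. \<exists>q. degree q = Suc l \<and> half_wave_poly (pwm (1/2) (Suc l)) q"
    by (intro ballI IH) auto
  from bchoice[OF this] obtain qs
    where "\<forall>l\<in>{..<Suc k}. degree (qs l) = Suc l \<and> half_wave_poly (pwm (1/2) (Suc l)) (qs l)"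
    by blast
  then have deg_qs: "\<And>l. l < Suc k \<Longrightarrow> degree (qs l) = Suc l"
    and wave_qs: "\<And>l. l < Suc k \<Longrightarrow> half_wave_poly (pwm (1/2) (Suc l)) (qs l)"
    by simp_all
  define P where "P = (\<lambda>t. oint (1/2) t (pwm (1/2) (Suc k)))"
  obtain Q where Q: "pderiv Q = qs k"
    and wave_Q: "half_wave_poly (\<lambda>t. P t - integral {0..1} P) Q"
    using half_wave_poly_centred_primitive[OF wave_qs[of k]] unfolding P_def by auto
  have deg_Q: "degree Q = Suc (Suc k)"
    using degree_eq_Suc_degree_pderiv[of Q] deg_qs[of k] Q by fastforce
  define c where "c l = integral {0..1} (\<lambda>s. pwm (1/2) (Suc l) s * P s)" for l
  define pb where "pb t = P t - integral {0..1} P - (\<Sum>l<Suc k. c l * pwm (1/2) (Suc l) t)" for t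
  define R where "R = Q - (\<Sum>l<Suc k. smult (c l) (qs l))"
  have wave_R: "half_wave_poly pb R"
    unfolding pb_def R_def by (intro half_wave_poly_diff wave_Q half_wave_poly_sum wave_qs) simp
  have "degree (\<Sum>l<Suc k. smult (c l) (qs l)) < degree Q"
    unfolding deg_Q by (intro degree_sum_less le_less_trans[OF degree_smult_le]) (auto simp: deg_qs)
  then have deg_R: "degree R = Suc (Suc k)"
    unfolding R_def using deg_Q degree_add_eq_left[of "- _" Q] by simp
  define I where "I = integral {0..1} (\<lambda>s. (pb s)\<^sup>2)"
  have "I > 0"
    unfolding I_def by (rule integral_square_half_wave_poly_pos[OF wave_R]) (use deg_R in auto)
  have pwm_eq: "pwm (1/2) (Suc (Suc k)) = (\<lambda>t. (1 / sqrt I) * pb t)"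
    unfolding I_def pb_def c_def P_def by (rule pwm_Suc_Suc_eq)
  show ?thesis
    unfolding pwm_eq
  proof (intro exI conjI)
    show "degree (smult (1 / sqrt I) R) = Suc (Suc k)"
      using deg_R \<open>I > 0\<close> by simp
    show "half_wave_poly (\<lambda>t. 1 / sqrt I * pb t) (smult (1 / sqrt I) R)"
      by (rule half_wave_poly_smult[OF wave_R])
  qed
qed

lemma half_wave_poly_pwm:
  assumes "1 \<le> k"
  shows "\<exists>q. degree q = k \<and> half_wave_poly (pwm (1/2) k) q"
  using assms
proof (induction k rule: less_induct)
  case (less k)
  consider "k = 1" | j where "k = Suc (Suc j)"
    using less.prems by (metis One_nat_def Suc_le_D not0_implies_Suc not_less_eq_eq)
  then show ?case
  proof cases
    case 1
    then show ?thesis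
      using half_wave_poly_pwm_1 by (intro exI[of _ "[:- sqrt 3, 4 * sqrt 3:]"]) simp
  next
    case 2
    have "\<exists>q. degree q = Suc (Suc j) \<and> half_wave_poly (pwm (1/2) (Suc (Suc j))) q"
      by (rule half_wave_poly_pwm_Suc_Suc) (use less.IH 2 in auto)
    then show ?thesis
      unfolding 2 .
  qed
qed

lemma half_wave_poly_in_span_pwm:
  assumes "half_wave_poly g q" "degree q \<le> n"
  shows "\<exists>c. \<forall>t\<in>{0..1}. g t = (\<Sum>k=1..n. c k * pwm (1/2) k t)"
  using assms
proof (induction n arbitrary: g q)
  case 0
  then have "q = 0"
    using half_wave_poly_degree_0 by blast
  then show ?case
    using half_wave_poly_zero[OF "0.prems"(1)[unfolded \<open>q = 0\<close>]] by simp
next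
  case (Suc n)
  obtain p where deg_p: "degree p = Suc n" and wave_p: "half_wave_poly (pwm (1/2) (Suc n)) p"
    using half_wave_poly_pwm[of "Suc n"] by auto
  define r where "r = coeff q (Suc n) / coeff p (Suc n)"
  have "coeff p (Suc n) \<noteq> 0"
    using deg_p by (metis degree_0 leading_coeff_0_iff nat.distinct(1))
  then have "coeff (q - smult r p) (Suc n) = 0"
    by (simp add: r_def)
  moreover have "degree (q - smult r p) \<le> Suc n"
    using Suc.prems(2) deg_p by (intro degree_diff_le) (auto intro: le_trans[OF degree_smult_le])
  ultimately have "coeff (q - smult r p) i = 0" if "n < i" for i
    using that coeff_eq_0[of "q - smult r p" i] by (cases "i = Suc n") auto
  then have "degree (q - smult r p) \<le> n"
    by (intro degree_le) auto
  moreover have "half_wave_poly (\<lambda>t. g t - r * pwm (1/2) (Suc n) t) (q - smult r p)"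
    by (intro half_wave_poly_diff half_wave_poly_smult Suc.prems(1) wave_p)
  ultimately obtain c
    where c: "\<And>t. t \<in> {0..1} \<Longrightarrow> g t - r * pwm (1/2) (Suc n) t = (\<Sum>k=1..n. c k * pwm (1/2) k t)"
    using Suc.IH by blast
  have "g t = (\<Sum>k=1..Suc n. (c(Suc n := r)) k * pwm (1/2) k t)" if "t \<in> {0..1}" for t
  proof -
    have "(\<Sum>k=1..n. (c(Suc n := r)) k * pwm (1/2) k t) = (\<Sum>k=1..n. c k * pwm (1/2) k t)"
      by (intro sum.cong) auto
    then show ?thesis
      using c[OF that] by (simp add: sum.cl_ivl_Suc)
  qed
  then show ?case
    by blast
qed

theorem mainTheorem3:
  fixes Np :: nat and f :: "real \<Rightarrow> real"
  assumes "Np \<ge> 1"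
    and "\<exists>q :: real poly. degree q \<le> Np \<and> (\<forall>\<tau>\<in>{0..<1/2}. f \<tau> = poly q \<tau>)"
    and "continuous (at (1/2) within {0..1}) f"
    and "\<forall>\<tau>\<in>{0..1/2}. f (\<tau> + 1/2) = - f \<tau>"
  shows "\<exists>c :: nat \<Rightarrow> real. \<forall>\<tau>\<in>{0..1}. f \<tau> = (\<Sum>k=1..Np. c k * pwm (1/2) k \<tau>)"
proof -
  obtain q where deg_q: "degree q \<le> Np" and f_q: "\<forall>\<tau>\<in>{0..<1/2}. f \<tau> = poly q \<tau>"
    using assms(2) by blast
  have "f (1/2) = poly q (1/2)"
    by (rule eq_at_right_endpoint_if_continuous[of 0 "1/2" "{0..1}"]) (use assms(3) f_q in auto)
  then have "f t = poly q t" if "t \<in> {0..1/2}" for t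
  proof (cases "t < 1/2")
    case False
    then have "t = 1/2"
      using that by simp
    then show ?thesis
      using \<open>f (1/2) = poly q (1/2)\<close> by (simp only:)
  qed (use that f_q in auto)
  then have "half_wave_poly f q"
    using assms(4) unfolding half_wave_poly_def by blast
  then show ?thesis
    using half_wave_poly_in_span_pwm deg_q by blast
qed

end
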